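(* Let $C\in\mathcal C_n$ and $A=\Xi^{-1}(C)$, and for $i,j\in[n]$ put $L_{ij}=\sum_{k=1}^n kA_{i,j,k}$. Then every maximal chain in $(\mathcal C_n,\preceq)$ from the minimum element $M_n$ to $C$ has the same length $r(C)$, and $$r(C)=\frac{69n^5+180n^4+170n^3+60n^2+4^{1+(-1)^n}n}{480}-\sum_{1\le i,j\le n}(n-i+1)(n-j+1)(n-L_{ij}+1).$$
   Context: Let $[n]=\{1,\dots,n\}$, $[0,n]=\{0,\dots,n\}$. A corner-sum hypermatrix of order $n$ is an integer array $C=(C_{i,j,k})_{i,j,k\in[0,n]}$ such that for all $i,j\in[0,n]$: $C_{i,j,0}=C_{i,0,j}=C_{0,i,j}=0$, $C_{i,j,n}=C_{i,n,j}=C_{n,i,j}=ij$, and for all $k\in[n]$ each of $C_{i,j,k}-C_{i,j,k-1}$, $C_{i,k,j}-C_{i,k-1,j}$, $C_{k,i,j}-C_{k-1,i,j}$ is an integer in $\{\max(0,i+j-n),\dots,\min(i,j)\}$. $\mathcal C_n$ is the set of these, ordered by $C\preceq D$ iff $C\ge D$ entrywise; its minimum element is $M_n$ with $(M_n)_{i,j,k}=\min(k\min(i,j),\,ij-(n-k)\max(0,i+j-n))$. For an array $C$ indexed by $[0,n]^3$, $\Xi^{-1}(C)$ is the array indexed by $[n]^3$ with $\Xi^{-1}(C)_{i,j,k}=C_{i,j,k}-C_{i-1,j,k}-C_{i,j-1,k}-C_{i,j,k-1}+C_{i-1,j-1,k}+C_{i-1,j,k-1}+C_{i,j-1,k-1}-C_{i-1,j-1,k-1}$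 (the inverse of the corner-sum map $\Xi(A)_{i,j,k}=\sum_{a\le i,b\le j,c\le k}A_{a,b,c}$). *)

theory Defs
  imports Complex_Main
begin

type_synonym hypermatrix = "nat \<Rightarrow> nat \<Rightarrow> nat \<Rightarrow> int"

text \<open>Arrays indexed by [0,n]^3 are modelled as functions nat => nat => nat => int
  that vanish outside [0,n]^3 (so each array has a unique representative).\<close>

definition step_ok :: "nat \<Rightarrow> nat \<Rightarrow> nat \<Rightarrow> int \<Rightarrow> bool" where
  "step_ok n i j d \<longleftrightarrow> max 0 (int i + int j - int n) \<le> d \<and> d \<le> min (int i) (int j)"

definition corner_sum_hm :: "nat \<Rightarrow> hypermatrix \<Rightarrow> bool" where
  "corner_sum_hm n C \<longleftrightarrow>
     (\<forall>i j k. (n < i \<or> n < j \<or> n < k) \<longrightarrow> C i j k = 0) \<and>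
     (\<forall>i\<le>n. \<forall>j\<le>n. C i j 0 = 0 \<and> C i 0 j = 0 \<and> C 0 i j = 0 \<and>
        C i j n = int i * int j \<and> C i n j = int i * int j \<and> C n i j = int i * int j) \<and>
     (\<forall>i\<le>n. \<forall>j\<le>n. \<forall>k\<in>{1..n}.
        step_ok n i j (C i j k - C i j (k - 1)) \<and>
        step_ok n i j (C i k j - C i (k - 1) j) \<and>
        step_ok n i j (C k i j - C (k - 1) i j))"

definition CSH :: "nat \<Rightarrow> hypermatrix set" where
  "CSH n = {C. corner_sum_hm n C}"

definition cs_le :: "nat \<Rightarrow> hypermatrix \<Rightarrow> hypermatrix \<Rightarrow> bool" where
  "cs_le n C D \<longleftrightarrow> (\<forall>i\<le>n. \<forall>j\<le>n. \<forall>k\<le>n. D i j k \<le> C i j k)"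

definition Mmin :: "nat \<Rightarrow> hypermatrix" where
  "Mmin n i j k = (if i \<le> n \<and> j \<le> n \<and> k \<le> n then
     min (int k * min (int i) (int j))
         (int i * int j - (int n - int k) * max 0 (int i + int j - int n))
   else 0)"

definition Xi_inv :: "hypermatrix \<Rightarrow> nat \<Rightarrow> nat \<Rightarrow> nat \<Rightarrow> int" where
  "Xi_inv C i j k = C i j k - C (i-1) j k - C i (j-1) k - C i j (k-1)
     + C (i-1) (j-1) k + C (i-1) j (k-1) + C i (j-1) (k-1) - C (i-1) (j-1) (k-1)"

definition L_val :: "nat \<Rightarrow> hypermatrix \<Rightarrow> nat \<Rightarrow> nat \<Rightarrow> int" where
  "L_val n C i j = (\<Sum>k=1..n. int k * Xi_inv C i j k)"

definition is_chain :: "nat \<Rightarrow> hypermatrix set \<Rightarrow> bool" where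
  "is_chain n S \<longleftrightarrow> S \<subseteq> CSH n \<and> (\<forall>x\<in>S. \<forall>y\<in>S. cs_le n x y \<or> cs_le n y x)"

definition cs_interval :: "nat \<Rightarrow> hypermatrix \<Rightarrow> hypermatrix \<Rightarrow> hypermatrix set" where
  "cs_interval n a b = {X \<in> CSH n. cs_le n a X \<and> cs_le n X b}"

definition maximal_chain :: "nat \<Rightarrow> hypermatrix \<Rightarrow> hypermatrix \<Rightarrow> hypermatrix set \<Rightarrow> bool" where
  "maximal_chain n a b S \<longleftrightarrow> is_chain n S \<and> a \<in> S \<and> b \<in> S \<and> S \<subseteq> cs_interval n a b \<and>
     (\<forall>T. is_chain n T \<and> T \<subseteq> cs_interval n a b \<and> S \<subseteq> T \<longrightarrow> T = S)"

end

(*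
  Rank a hypermatrix by minus the sum of its entries. If C \<preceq> D and C \<noteq> D, decreasing C by one
  at an entry where it exceeds D and where the potential n C(a,b,c) - a b c is largest gives a
  corner-sum hypermatrix between C and D: the choice of potential guarantees that none of the
  step constraints through that entry is tight. So the rank is strictly monotone and every
  nontrivial interval contains an element of rank one more than its bottom, whence every maximal
  chain from M_n to C has exactly sum(M_n) - sum(C) + 1 elements.
  Summation by parts in the three coordinates gives
  sum(C) = \<Sum>_{i,j} (n - i + 1) (n - j + 1) (n - L_ij + 1), and sum(M_n) is evaluated in closed
  form from the piecewise polynomial line sums of M_n.
*)
theory Submission
  imports Defs
begin

section \<open>Maximal chains in graded orders\<close>

locale graded_order =
  fixes P :: "'a set" and le :: "'a \<Rightarrow> 'a \<Rightarrow> bool" and rank :: "'a \<Rightarrow> int"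
  assumes refl: "x \<in> P \<Longrightarrow> le x x"
    and trans: "x \<in> P \<Longrightarrow> y \<in> P \<Longrightarrow> z \<in> P \<Longrightarrow> le x y \<Longrightarrow> le y z \<Longrightarrow> le x z"
    and rank_strict_mono: "x \<in> P \<Longrightarrow> y \<in> P \<Longrightarrow> le x y \<Longrightarrow> x \<noteq> y \<Longrightarrow> rank x < rank y"
    and rank_cover: "x \<in> P \<Longrightarrow> y \<in> P \<Longrightarrow> le x y \<Longrightarrow> x \<noteq> y \<Longrightarrow>
      \<exists>z\<in>P. le x z \<and> le z y \<and> rank z = rank x + 1"
begin

definition chain :: "'a set \<Rightarrow> bool" where
  "chain S \<longleftrightarrow> S \<subseteq> P \<and> (\<forall>x\<in>S. \<forall>y\<in>S. le x y \<or> le y x)"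

definition interval :: "'a \<Rightarrow> 'a \<Rightarrow> 'a set" where
  "interval a b = {x \<in> P. le a x \<and> le x b}"

definition maximal_chain :: "'a \<Rightarrow> 'a \<Rightarrow> 'a set \<Rightarrow> bool" where
  "maximal_chain a b S \<longleftrightarrow> chain S \<and> a \<in> S \<and> b \<in> S \<and> S \<subseteq> interval a b \<and>
     (\<forall>T. chain T \<and> T \<subseteq> interval a b \<and> S \<subseteq> T \<longrightarrow> T = S)"

lemma rank_mono: "x \<in> P \<Longrightarrow> y \<in> P \<Longrightarrow> le x y \<Longrightarrow> rank x \<le> rank y"
  by (cases "x = y") (auto dest: rank_strict_mono)

lemma chain_le_of_rank_le:
  assumes "chain S" "x \<in> S" "y \<in> S" "rank x \<le> rank y"
  shows "le x y"
proof (cases "x = y")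
  case True
  then show ?thesis using assms refl unfolding chain_def by blast
next
  case False
  have "x \<in> P" "y \<in> P" "le x y \<or> le y x" using assms unfolding chain_def by blast+
  then show ?thesis using rank_strict_mono[of y x] False assms(4) by auto
qed

lemma inj_on_rank_chain:
  assumes "chain S"
  shows "inj_on rank S"
proof (rule inj_onI)
  fix x y assume xy: "x \<in> S" "y \<in> S" "rank x = rank y"
  have "x \<in> P" "y \<in> P" using assms xy unfolding chain_def by blast+
  moreover have "le x y" "le y x" using chain_le_of_rank_le[OF assms] xy by simp_all
  ultimately show "x = y" using rank_strict_mono xy(3) by fastforce
qed

lemma rank_image_subset_interval:
  assumes "S \<subseteq> interval a b" "a \<in> P" "b \<in> P"
  shows "rank ` S \<subseteq> {rank a..rank b}"
proof
  fix r assume "r \<in> rank ` S"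
  then obtain x where "x \<in> S" "r = rank x" by blast
  then show "r \<in> {rank a..rank b}"
    using assms rank_mono[of a x] rank_mono[of x b] unfolding interval_def by auto
qed

lemma chain_in_interval_finite_card:
  assumes "chain S" "S \<subseteq> interval a b" "a \<in> P" "b \<in> P"
  shows "finite S" "card S \<le> nat (rank b - rank a + 1)"
proof -
  have inj: "inj_on rank S" using inj_on_rank_chain[OF assms(1)] .
  have sub: "rank ` S \<subseteq> {rank a..rank b}" using rank_image_subset_interval[OF assms(2-4)] .
  then show "finite S" using inj finite_imageD finite_subset by blast
  have "card S = card (rank ` S)" using inj by (simp add: card_image)
  also have "\<dots> \<le> card {rank a..rank b}" using sub by (intro card_mono) auto
  finally show "card S \<le> nat (rank b - rank a + 1)" by simp
qed

lemma maximal_chain_absorbs: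
  assumes S: "maximal_chain a b S" and z: "z \<in> interval a b"
    and comparable: "\<And>u. u \<in> S \<Longrightarrow> le u z \<or> le z u"
  shows "z \<in> S"
proof -
  have ch: "chain S" and Sab: "S \<subseteq> interval a b"
    and max: "\<And>T. chain T \<Longrightarrow> T \<subseteq> interval a b \<Longrightarrow> S \<subseteq> T \<Longrightarrow> T = S"
    using S unfolding maximal_chain_def by blast+
  have "z \<in> P" using z unfolding interval_def by blast
  then have "chain (insert z S)"
    using ch comparable refl[of z] unfolding chain_def by blast
  moreover have "insert z S \<subseteq> interval a b" using Sab z by blast
  ultimately have "insert z S = S" using max[of "insert z S"] by blast
  then show ?thesis by blast
qed

text \<open>Otherwise a cover of x below the next element of the chain could be inserted.\<close>
lemma maximal_chain_rank_succ:
  assumes S: "maximal_chain a b S" and x: "x \<in> S" "x \<noteq> b"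
  shows "\<exists>z\<in>S. rank z = rank x + 1"
proof -
  have ch: "chain S" and ab: "a \<in> S" "b \<in> S" and Sab: "S \<subseteq> interval a b"
    using S unfolding maximal_chain_def by blast+
  have SP: "S \<subseteq> P" using ch unfolding chain_def by blast
  have fin: "finite S"
    using chain_in_interval_finite_card(1)[OF ch Sab] ab SP by blast
  define U where "U = {y \<in> S. rank x < rank y}"
  have "le x b" using x(1) Sab unfolding interval_def by blast
  then have "b \<in> U"
    using x ab SP rank_strict_mono[of x b] unfolding U_def by blast
  moreover have "finite U" using fin unfolding U_def by simp
  ultimately obtain y where "is_arg_min rank (\<lambda>y. y \<in> U) y"
    using ex_is_arg_min_if_finite[of U rank] by blast
  then have y: "y \<in> U" and y_min: "\<And>u. u \<in> U \<Longrightarrow> rank y \<le> rank u"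
    unfolding is_arg_min_linorder by auto
  have yS: "y \<in> S" and xy_rank: "rank x < rank y" using y unfolding U_def by auto
  have xy: "le x y" "x \<noteq> y"
    using chain_le_of_rank_le[OF ch x(1) yS] xy_rank by auto
  obtain z where z: "z \<in> P" "le x z" "le z y" "rank z = rank x + 1"
    using rank_cover[OF _ _ xy] x yS SP by blast
  have "le u z \<or> le z u" if u: "u \<in> S" for u
  proof (cases "rank u \<le> rank x")
    case True
    then have "le u x" using chain_le_of_rank_le[OF ch u x(1)] by simp
    then show ?thesis using trans[of u x z] z x u SP by blast
  next
    case False
    then have "le y u" using y_min[of u] chain_le_of_rank_le[OF ch yS u] u unfolding U_def by simp
    then show ?thesis using trans[of z y u] z yS u SP by blast
  qed
  moreover have "z \<in> interval a b"
  proof -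
    have "le a x" "le y b" using x(1) yS Sab unfolding interval_def by blast+
    then show ?thesis
      using trans[of a x z] trans[of z y b] ab x(1) yS z SP unfolding interval_def by auto
  qed
  ultimately have "z \<in> S" using maximal_chain_absorbs[OF S] by blast
  then show ?thesis using z(4) by blast
qed

theorem maximal_chain_card:
  assumes S: "maximal_chain a b S"
  shows "finite S" "int (card S) = rank b - rank a + 1"
proof -
  have ch: "chain S" and ab: "a \<in> S" "b \<in> S" "a \<in> P" "b \<in> P" and Sab: "S \<subseteq> interval a b"
    using S unfolding maximal_chain_def chain_def by blast+
  show "finite S" using chain_in_interval_finite_card(1)[OF ch Sab ab(3,4)] .
  have reach: "rank a + int k \<in> rank ` S" if "int k \<le> rank b - rank a" for k
    using that
  proof (induction k)
    case 0
    then show ?case using ab by simp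
  next
    case (Suc k)
    then obtain x where x: "x \<in> S" "rank x = rank a + int k" by force
    then have "x \<noteq> b" using Suc.prems by auto
    then obtain z where "z \<in> S" "rank z = rank x + 1"
      using maximal_chain_rank_succ[OF S x(1)] by blast
    then show ?case using x by force
  qed
  have "{rank a..rank b} \<subseteq> rank ` S"
  proof
    fix r assume "r \<in> {rank a..rank b}"
    then show "r \<in> rank ` S" using reach[of "nat (r - rank a)"] by simp
  qed
  then have "rank ` S = {rank a..rank b}"
    using rank_image_subset_interval[OF Sab ab(3,4)] by blast
  moreover have "rank a \<le> rank b"
    using ab Sab rank_mono unfolding interval_def by blast
  ultimately show "int (card S) = rank b - rank a + 1"
    using card_image[OF inj_on_rank_chain[OF ch]] by simp
qed

theorem maximal_chain_exists:
  assumes "a \<in> P" "b \<in> P" "le a b"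
  shows "\<exists>S. maximal_chain a b S"
proof -
  define Q where "Q S \<longleftrightarrow> chain S \<and> S \<subseteq> interval a b \<and> a \<in> S \<and> b \<in> S" for S
  have "Q {a, b}"
    using assms refl unfolding Q_def chain_def interval_def by auto
  moreover have "card S < nat (rank b - rank a + 1) + 1" if "Q S" for S
    using chain_in_interval_finite_card(2)[of S a b] that assms unfolding Q_def by simp
  ultimately obtain S where S: "Q S" and S_max: "\<And>T. Q T \<Longrightarrow> card T \<le> card S"
    using ex_has_greatest_nat[of Q "{a, b}" card] by blast
  have "T = S" if "chain T" "T \<subseteq> interval a b" "S \<subseteq> T" for T
  proof -
    have "finite T" using chain_in_interval_finite_card(1)[OF that(1,2) assms(1,2)] .
    moreover have "card T \<le> card S" using S S_max[of T] that unfolding Q_def by blast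
    ultimately show ?thesis using card_seteq that(3) by blast
  qed
  then show ?thesis using S unfolding maximal_chain_def Q_def by blast
qed

end

section \<open>Corner-sum hypermatrices and their minimum\<close>

lemma CSH_outside: "C \<in> CSH n \<Longrightarrow> n < i \<or> n < j \<or> n < k \<Longrightarrow> C i j k = 0"
  unfolding CSH_def corner_sum_hm_def by blast

lemma CSH_faces:
  assumes "C \<in> CSH n" "i \<le> n" "j \<le> n"
  shows "C i j 0 = 0" "C i 0 j = 0" "C 0 i j = 0"
    and "C i j n = int i * int j" "C i n j = int i * int j" "C n i j = int i * int j"
  using assms unfolding CSH_def corner_sum_hm_def by auto

lemma CSH_steps:
  assumes "C \<in> CSH n" "i \<le> n" "j \<le> n" "1 \<le> k" "k \<le> n"
  shows "step_ok n i j (C i j k - C i j (k - 1))"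
    and "step_ok n i j (C i k j - C i (k - 1) j)"
    and "step_ok n i j (C k i j - C (k - 1) i j)"
proof -
  have "k \<in> {1..n}" using assms(4,5) by simp
  then show "step_ok n i j (C i j k - C i j (k - 1))"
    and "step_ok n i j (C i k j - C i (k - 1) j)"
    and "step_ok n i j (C k i j - C (k - 1) i j)"
    using assms(1-3) unfolding CSH_def corner_sum_hm_def by blast+
qed

lemma CSH_eqI:
  assumes "X \<in> CSH n" "Y \<in> CSH n"
    and "\<And>i j k. i \<le> n \<Longrightarrow> j \<le> n \<Longrightarrow> k \<le> n \<Longrightarrow> X i j k = Y i j k"
  shows "X = Y"
proof (intro ext)
  fix i j k
  show "X i j k = Y i j k"
  proof (cases "i \<le> n \<and> j \<le> n \<and> k \<le> n")
    case True
    then show ?thesis using assms(3) by blast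
  next
    case False
    then show ?thesis using CSH_outside[OF assms(1)] CSH_outside[OF assms(2)] by force
  qed
qed

lemma cs_le_refl: "cs_le n X X"
  unfolding cs_le_def by simp

lemma cs_le_trans: "cs_le n X Y \<Longrightarrow> cs_le n Y Z \<Longrightarrow> cs_le n X Z"
  unfolding cs_le_def by (meson order_trans)

definition entry_sum :: "nat \<Rightarrow> hypermatrix \<Rightarrow> int" where
  "entry_sum n X = (\<Sum>(i, j, k) \<in> {..n} \<times> {..n} \<times> {..n}. X i j k)"

lemma entry_sum_nested: "entry_sum n X = (\<Sum>i\<le>n. \<Sum>j\<le>n. \<Sum>k\<le>n. X i j k)"
  unfolding entry_sum_def by (simp add: sum.cartesian_product)

lemma entry_sum_strict_antimono:
  assumes "X \<in> CSH n" "Y \<in> CSH n" "cs_le n X Y" "X \<noteq> Y"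
  shows "entry_sum n Y < entry_sum n X"
proof -
  obtain i j k where ijk: "i \<le> n" "j \<le> n" "k \<le> n" "X i j k \<noteq> Y i j k"
    using CSH_eqI[OF assms(1,2)] assms(4) by blast
  let ?B = "{..n} \<times> {..n} \<times> {..n}" and ?X = "\<lambda>(i, j, k). X i j k" and ?Y = "\<lambda>(i, j, k). Y i j k"
  have le: "\<forall>p \<in> ?B. ?Y p \<le> ?X p"
    using assms(3) unfolding cs_le_def by auto
  have "Y i j k < X i j k" using ijk assms(3) unfolding cs_le_def by force
  then have "\<exists>p \<in> ?B. ?Y p < ?X p"
    using ijk by force
  then show ?thesis
    unfolding entry_sum_def using sum_strict_mono_ex1[OF _ le] by blast
qed

lemma Mmin_eq:
  "i \<le> n \<Longrightarrow> j \<le> n \<Longrightarrow> k \<le> n \<Longrightarrow> Mmin n i j k =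
     min (int k * min (int i) (int j))
       (int i * int j - (int n - int k) * max 0 (int i + int j - int n))"
  unfolding Mmin_def by simp

lemma Mmin_commute12: "Mmin n i j k = Mmin n j i k"
  unfolding Mmin_def by (simp add: ac_simps)

lemma Mmin_symmetric:
  assumes "i \<le> n" "j \<le> n" "k \<le> n"
  shows "Mmin n i j k = min (min (int k * int i) (int k * int j))
     (min (int i * int j) (int i * int j + int j * int k + int k * int i
        - int n * (int i + int j + int k) + int n * int n))"
proof -
  have "int k * min (int i) (int j) = min (int k * int i) (int k * int j)"
    by (simp add: min_mult_distrib_left)
  moreover have "int i * int j - (int n - int k) * max 0 (int i + int j - int n)
      = min (int i * int j) (int i * int j - (int n - int k) * (int i + int j - int n))"
  proof (cases "int i + int j \<le> int n")
    case True
    then show ?thesis using assms by (simp add: min_def mult_nonneg_nonpos)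
  next
    case False
    then have "0 \<le> (int n - int k) * (int i + int j - int n)" using assms by simp
    then show ?thesis using False by (simp add: min_absorb2)
  qed
  ultimately show ?thesis
    using assms by (simp add: Mmin_eq algebra_simps)
qed

lemma Mmin_commute23:
  assumes "i \<le> n" "j \<le> n" "k \<le> n"
  shows "Mmin n i j k = Mmin n i k j"
  unfolding Mmin_symmetric[OF assms] Mmin_symmetric[OF assms(1,3,2)] by (simp add: ac_simps)

lemma Mmin_step:
  assumes "i \<le> n" "j \<le> n" "1 \<le> k" "k \<le> n"
  shows "step_ok n i j (Mmin n i j k - Mmin n i j (k - 1))"
proof -
  let ?m = "min (int i) (int j)" and ?l = "max 0 (int i + int j - int n)"
    and ?u = "int (k - 1) * min (int i) (int j)"
    and ?v = "int i * int j - (int n - int (k - 1)) * max 0 (int i + int j - int n)"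
  have step: "Mmin n i j k = min (?u + ?m) (?v + ?l)"
    using assms by (simp add: Mmin_eq[OF assms(1,2,4)] of_nat_diff algebra_simps)
  have prev: "Mmin n i j (k - 1) = min ?u ?v"
    using assms by (simp add: Mmin_eq[OF assms(1,2)])
  have min_shift: "l \<le> min (u + m) (v + l) - min u v \<and> min (u + m) (v + l) - min u v \<le> m"
    if "l \<le> m" for l m u v :: int
    using that by (auto simp: min_def)
  have "?l \<le> ?m" using assms(1,2) by simp
  then show ?thesis
    unfolding step_ok_def step prev using min_shift by blast
qed

lemma Mmin_in_CSH: "Mmin n \<in> CSH n"
  unfolding CSH_def corner_sum_hm_def
proof (intro CollectI conjI allI impI ballI)
  fix i j k :: nat assume "n < i \<or> n < j \<or> n < k"
  then show "Mmin n i j k = 0" unfolding Mmin_def by auto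
next
  fix i j assume ij: "i \<le> n" "j \<le> n"
  have "0 \<le> (int n - int i) * (int n - int j)" using ij by simp
  then have "Mmin n i j 0 = 0"
    using ij by (simp add: Mmin_eq max_def algebra_simps)
  moreover have "int i * int j \<le> int n * min (int i) (int j)"
    using ij mult_right_mono[of "int j" "int n" "int i"] mult_right_mono[of "int i" "int n" "int j"]
    by (simp add: min_def mult.commute)
  then have "Mmin n i j n = int i * int j"
    using ij by (simp add: Mmin_eq)
  ultimately show "Mmin n i j 0 = 0" "Mmin n i 0 j = 0" "Mmin n 0 i j = 0"
    and "Mmin n i j n = int i * int j" "Mmin n i n j = int i * int j" "Mmin n n i j = int i * int j"
    using ij Mmin_commute12 Mmin_commute23 by (metis le0 order_refl)+
next
  fix i j k assume ij: "i \<le> n" "j \<le> n" and "k \<in> {1..n}"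
  then have k: "1 \<le> k" "k \<le> n" "k - 1 \<le> n" by auto
  have "Mmin n i k j = Mmin n i j k" "Mmin n i (k - 1) j = Mmin n i j (k - 1)"
    using Mmin_commute23[OF ij(1) _ ij(2)] k by simp_all
  moreover have "Mmin n k i j = Mmin n i k j" "Mmin n (k - 1) i j = Mmin n i (k - 1) j"
    by (simp_all add: Mmin_commute12)
  ultimately show "step_ok n i j (Mmin n i j k - Mmin n i j (k - 1))"
    and "step_ok n i j (Mmin n i k j - Mmin n i (k - 1) j)"
    and "step_ok n i j (Mmin n k i j - Mmin n (k - 1) i j)"
    using Mmin_step[OF ij k(1,2)] by simp_all
qed

lemma upper_bounds_of_step_bounds:
  fixes f :: "nat \<Rightarrow> int"
  assumes steps: "\<And>k. 1 \<le> k \<Longrightarrow> k \<le> n \<Longrightarrow> lo \<le> f k - f (k - 1) \<and> f k - f (k - 1) \<le> hi"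
    and "k \<le> n"
  shows "f k \<le> f 0 + int k * hi" "f k \<le> f n - int (n - k) * lo"
proof -
  show "f k \<le> f 0 + int k * hi"
    using assms(2)
  proof (induction k)
    case (Suc k)
    then show ?case using steps[of "Suc k"] by (simp add: algebra_simps)
  qed simp
  have "f (n - d) \<le> f n - int d * lo" if "d \<le> n" for d
    using that
  proof (induction d)
    case (Suc d)
    then have "lo \<le> f (n - d) - f (n - Suc d)" using steps[of "n - d"] by simp
    with Suc show ?case by (simp add: algebra_simps)
  qed simp
  from this[of "n - k"] show "f k \<le> f n - int (n - k) * lo" using assms(2) by simp
qed

lemma Mmin_least: "C \<in> CSH n \<Longrightarrow> cs_le n (Mmin n) C"
  unfolding cs_le_def
proof (intro allI impI)
  fix i j k assume C: "C \<in> CSH n" and ijk: "i \<le> n" "j \<le> n" "k \<le> n"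
  have "C i j k \<le> C i j 0 + int k * min (int i) (int j)"
    and "C i j k \<le> C i j n - int (n - k) * max 0 (int i + int j - int n)"
    using upper_bounds_of_step_bounds[of n _ "\<lambda>k. C i j k", OF _ ijk(3)] CSH_steps(1)[OF C ijk(1,2)]
    unfolding step_ok_def by blast+
  then show "C i j k \<le> Mmin n i j k"
    using CSH_faces[OF C ijk(1,2)] ijk by (simp add: Mmin_eq of_nat_diff)
qed

section \<open>Covers\<close>

lemma step_bounds_slack:
  assumes "1 \<le> x" "x < n" "1 \<le> y" "y < n"
  shows "int n * max 0 (int x + int y - int n) < int x * int y"
    and "int x * int y < int n * min (int x) (int y)"
proof -
  have "int x * int y - int n * (int x + int y - int n) = (int n - int x) * (int n - int y)"
    by (simp add: algebra_simps)
  moreover have "0 < (int n - int x) * (int n - int y)" "0 < int x * int y" using assms by simp_all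
  ultimately show "int n * max 0 (int x + int y - int n) < int x * int y"
    by (cases "int x + int y \<le> int n") simp_all
  have "int x * int y < int n * int y" "int x * int y < int x * int n" using assms by simp_all
  then show "int x * int y < int n * min (int x) (int y)"
    by (cases "x \<le> y") (simp_all add: min_def mult.commute)
qed

text \<open>Along a line of weight w = x y the step bounds satisfy n lo < w < n hi. If a step of f
  next to position c were at its bound, then, as g < f at c and g obeys the same bounds, g < f
  would hold at the neighbour too, and the neighbour would have the larger potential n f - w k.\<close>
lemma line_slack:
  fixes f g :: "nat \<Rightarrow> int"
  assumes xy: "x \<in> {1..<n}" "y \<in> {1..<n}" and c: "1 \<le> c" and gf: "g c < f c"
    and g_steps: "step_ok n x y (g c - g (c - 1))" "step_ok n x y (g (c + 1) - g c)"
    and f_max: "\<And>k. k \<le> c + 1 \<Longrightarrow> g k < f k \<Longrightarrow>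
      int n * f k - int x * int y * int k \<le> int n * f c - int x * int y * int c"
  shows "max 0 (int x + int y - int n) < f c - f (c - 1)"
    and "f (c + 1) - f c < min (int x) (int y)"
proof -
  let ?lo = "max 0 (int x + int y - int n)" and ?hi = "min (int x) (int y)"
    and ?w = "int x * int y"
  have lo: "int n * ?lo < ?w" and hi: "?w < int n * ?hi"
    using step_bounds_slack[of x n y] xy by auto
  show "?lo < f c - f (c - 1)"
  proof (rule ccontr)
    assume "\<not> ?lo < f c - f (c - 1)"
    then have tight: "f c - ?lo \<le> f (c - 1)" by linarith
    moreover have "?lo \<le> g c - g (c - 1)" using g_steps(1) unfolding step_ok_def by simp
    ultimately have "g (c - 1) < f (c - 1)" using gf by linarith
    then have "int n * f (c - 1) + ?w \<le> int n * f c"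
      using f_max[of "c - 1"] c by (simp add: of_nat_diff algebra_simps)
    moreover have "int n * (f c - ?lo) \<le> int n * f (c - 1)"
      using tight by (rule mult_left_mono) simp
    ultimately show False using lo by (simp add: algebra_simps)
  qed
  show "f (c + 1) - f c < ?hi"
  proof (rule ccontr)
    assume "\<not> f (c + 1) - f c < ?hi"
    then have tight: "f c + ?hi \<le> f (c + 1)" by linarith
    moreover have "g (c + 1) - g c \<le> ?hi" using g_steps(2) unfolding step_ok_def by simp
    ultimately have "g (c + 1) < f (c + 1)" using gf by linarith
    then have "int n * f (c + 1) \<le> int n * f c + ?w"
      using f_max[of "c + 1"] by (simp add: algebra_simps)
    moreover have "int n * (f c + ?hi) \<le> int n * f (c + 1)"
      using tight by (rule mult_left_mono) simp
    ultimately show False using hi by (simp add: algebra_simps)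
  qed
qed

lemma step_ok_decrement_at:
  fixes f :: "nat \<Rightarrow> int"
  assumes "1 \<le> k" "step_ok n i j (f k - f (k - 1))"
    and "p \<Longrightarrow> k = c \<Longrightarrow> max 0 (int i + int j - int n) < f k - f (k - 1)"
    and "p \<Longrightarrow> k = c + 1 \<Longrightarrow> f k - f (k - 1) < min (int i) (int j)"
  shows "step_ok n i j ((f k - of_bool (p \<and> k = c)) - (f (k - 1) - of_bool (p \<and> k - 1 = c)))"
  using assms unfolding step_ok_def by (cases "p \<and> k = c"; cases "p \<and> k = c + 1") auto

lemma CSH_decrement:
  assumes C: "C \<in> CSH n" and abc: "a \<in> {1..<n}" "b \<in> {1..<n}" "c \<in> {1..<n}"
    and slack3: "max 0 (int a + int b - int n) < C a b c - C a b (c - 1)"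
       "C a b (c + 1) - C a b c < min (int a) (int b)"
    and slack2: "max 0 (int a + int c - int n) < C a b c - C a (b - 1) c"
       "C a (b + 1) c - C a b c < min (int a) (int c)"
    and slack1: "max 0 (int b + int c - int n) < C a b c - C (a - 1) b c"
       "C (a + 1) b c - C a b c < min (int b) (int c)"
  shows "(\<lambda>i j k. C i j k - of_bool (i = a \<and> j = b \<and> k = c)) \<in> CSH n"
    (is "?E \<in> CSH n")
  unfolding CSH_def corner_sum_hm_def
proof (intro CollectI conjI allI impI ballI)
  fix i j k :: nat
  assume "n < i \<or> n < j \<or> n < k"
  then show "?E i j k = 0" using CSH_outside[OF C] abc by auto
next
  fix i j assume ij: "i \<le> n" "j \<le> n"
  show "?E i j 0 = 0" "?E i 0 j = 0" "?E 0 i j = 0"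
    and "?E i j n = int i * int j" "?E i n j = int i * int j" "?E n i j = int i * int j"
    using CSH_faces[OF C ij] abc by auto
next
  fix i j k assume ij: "i \<le> n" "j \<le> n" and k: "k \<in> {1..n}"
  note steps = CSH_steps[OF C ij, of k]
  show "step_ok n i j (?E i j k - ?E i j (k - 1))"
    using step_ok_decrement_at[of k n i j "\<lambda>k. C i j k" "i = a \<and> j = b" c] steps k slack3
    by (auto simp: conj_ac)
  show "step_ok n i j (?E i k j - ?E i (k - 1) j)"
    using step_ok_decrement_at[of k n i j "\<lambda>k. C i k j" "i = a \<and> j = c" b] steps k slack2
    by (auto simp: conj_ac)
  show "step_ok n i j (?E k i j - ?E (k - 1) i j)"
    using step_ok_decrement_at[of k n i j "\<lambda>k. C k i j" "i = b \<and> j = c" a] steps k slack1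
    by (auto simp: conj_ac)
qed

lemma max_potential_entry:
  assumes C: "C \<in> CSH n" and D: "D \<in> CSH n" and CD: "cs_le n C D" "C \<noteq> D"
  obtains a b c where "a \<in> {1..<n}" "b \<in> {1..<n}" "c \<in> {1..<n}" "D a b c < C a b c"
    and "\<And>i j k. i \<le> n \<Longrightarrow> j \<le> n \<Longrightarrow> k \<le> n \<Longrightarrow> D i j k < C i j k \<Longrightarrow>
      int n * C i j k - int i * int j * int k \<le> int n * C a b c - int a * int b * int c"
proof -
  define B where "B = {(i, j, k) \<in> {..n} \<times> {..n} \<times> {..n}. D i j k < C i j k}"
  define \<psi> where "\<psi> = (\<lambda>(i, j, k). int n * C i j k - int i * int j * int k)"
  obtain i j k where "i \<le> n" "j \<le> n" "k \<le> n" "C i j k \<noteq> D i j k"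
    using CSH_eqI[OF C D] CD(2) by blast
  then have "(i, j, k) \<in> B" using CD(1) unfolding B_def cs_le_def by force
  moreover have "finite B"
    by (rule finite_subset[of B "{..n} \<times> {..n} \<times> {..n}"]) (auto simp: B_def)
  ultimately obtain p where "is_arg_min (\<lambda>q. - \<psi> q) (\<lambda>q. q \<in> B) p"
    using ex_is_arg_min_if_finite[of B "\<lambda>q. - \<psi> q"] by blast
  then obtain a b c where p: "(a, b, c) \<in> B" and p_max: "\<And>q. q \<in> B \<Longrightarrow> \<psi> q \<le> \<psi> (a, b, c)"
    unfolding is_arg_min_linorder by (cases p) auto
  have abc_le: "a \<le> n" "b \<le> n" "c \<le> n" and DC: "D a b c < C a b c"
    using p unfolding B_def by auto
  have "a \<noteq> 0 \<and> b \<noteq> 0 \<and> c \<noteq> 0 \<and> a \<noteq> n \<and> b \<noteq> n \<and> c \<noteq> n"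
    using DC abc_le CSH_faces[OF C] CSH_faces[OF D] by (intro conjI notI) auto
  then have "a \<in> {1..<n}" "b \<in> {1..<n}" "c \<in> {1..<n}"
    using abc_le by auto
  moreover have "int n * C i j k - int i * int j * int k \<le> int n * C a b c - int a * int b * int c"
    if "i \<le> n" "j \<le> n" "k \<le> n" "D i j k < C i j k" for i j k
    using p_max[of "(i, j, k)"] that unfolding B_def \<psi>_def by simp
  ultimately show ?thesis using that DC by blast
qed

lemma CSH_cover:
  assumes C: "C \<in> CSH n" and D: "D \<in> CSH n" and CD: "cs_le n C D" "C \<noteq> D"
  shows "\<exists>E\<in>CSH n. cs_le n C E \<and> cs_le n E D \<and> entry_sum n E = entry_sum n C - 1"
proof -
  obtain a b c where abc: "a \<in> {1..<n}" "b \<in> {1..<n}" "c \<in> {1..<n}" and DC: "D a b c < C a b c"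
    and max_abc: "\<And>i j k. i \<le> n \<Longrightarrow> j \<le> n \<Longrightarrow> k \<le> n \<Longrightarrow> D i j k < C i j k \<Longrightarrow>
      int n * C i j k - int i * int j * int k \<le> int n * C a b c - int a * int b * int c"
    using max_potential_entry[OF assms] by blast
  have abc_le: "a \<le> n" "b \<le> n" "c \<le> n" using abc by auto
  note D_steps = CSH_steps[OF D]
  have slack3: "max 0 (int a + int b - int n) < C a b c - C a b (c - 1)"
    "C a b (c + 1) - C a b c < min (int a) (int b)"
    using line_slack[of a n b c "\<lambda>k. D a b k" "\<lambda>k. C a b k"] abc DC
      D_steps(1)[of a b c] D_steps(1)[of a b "c + 1"] max_abc[of a b] abc_le by auto
  have slack2: "max 0 (int a + int c - int n) < C a b c - C a (b - 1) c"
    "C a (b + 1) c - C a b c < min (int a) (int c)"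
    using line_slack[of a n c b "\<lambda>k. D a k c" "\<lambda>k. C a k c"] abc DC
      D_steps(2)[of a c b] D_steps(2)[of a c "b + 1"] max_abc[of a _ c] abc_le
    by (auto simp: ac_simps)
  have slack1: "max 0 (int b + int c - int n) < C a b c - C (a - 1) b c"
    "C (a + 1) b c - C a b c < min (int b) (int c)"
    using line_slack[of b n c a "\<lambda>k. D k b c" "\<lambda>k. C k b c"] abc DC
      D_steps(3)[of b c a] D_steps(3)[of b c "a + 1"] max_abc[of _ b c] abc_le
    by (auto simp: ac_simps)
  define E where "E i j k = C i j k - of_bool (i = a \<and> j = b \<and> k = c)" for i j k
  have "E \<in> CSH n"
    using CSH_decrement[OF C abc slack3 slack2 slack1] unfolding E_def by simp
  moreover have "cs_le n C E" "cs_le n E D"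
    using CD(1) DC unfolding cs_le_def E_def by auto
  moreover have "entry_sum n E = entry_sum n C - 1"
  proof -
    have "entry_sum n E = entry_sum n C - (\<Sum>p \<in> {..n} \<times> {..n} \<times> {..n}. of_bool (p = (a, b, c)))"
      unfolding entry_sum_def E_def sum_subtractf[symmetric] by (intro sum.cong) auto
    also have "(\<Sum>p \<in> {..n} \<times> {..n} \<times> {..n}. of_bool (p = (a, b, c))) = (1::int)"
      using abc_le by (simp add: of_bool_def sum.delta)
    finally show ?thesis .
  qed
  ultimately show ?thesis by blast
qed

lemma graded_order_CSH: "graded_order (CSH n) (cs_le n) (\<lambda>X. - entry_sum n X)"
proof
  fix X Y assume "X \<in> CSH n" "Y \<in> CSH n" "cs_le n X Y" "X \<noteq> Y"
  then obtain Z where "Z \<in> CSH n" "cs_le n X Z" "cs_le n Z Y" "entry_sum n Z = entry_sum n X - 1"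
    using CSH_cover by blast
  then show "\<exists>Z\<in>CSH n. cs_le n X Z \<and> cs_le n Z Y \<and> - entry_sum n Z = - entry_sum n X + 1"
    by auto
qed (auto intro: cs_le_refl cs_le_trans entry_sum_strict_antimono)

lemma maximal_chain_CSH: "maximal_chain n = graded_order.maximal_chain (CSH n) (cs_le n)"
  using graded_order_CSH[of n]
  by (intro ext) (simp add: maximal_chain_def graded_order.maximal_chain_def is_chain_def
      graded_order.chain_def cs_interval_def graded_order.interval_def)

section \<open>The entry sum as a weighted sum of the L values\<close>

lemma sum_diff_telescope:
  fixes g :: "nat \<Rightarrow> int"
  shows "(\<Sum>k=1..n. g k - g (k - 1)) = g n - g 0"
  by (induction n) simp_all

lemma sum_weighted_diff:
  fixes g :: "nat \<Rightarrow> int"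
  shows "(\<Sum>i=1..n. (int n - int i + 1) * (g i - g (i - 1))) = (\<Sum>i=1..n. g i) - int n * g 0"
proof (induction n)
  case (Suc n)
  have "(\<Sum>i=1..Suc n. (int (Suc n) - int i + 1) * (g i - g (i - 1)))
      = (\<Sum>i=1..Suc n. (int n - int i + 1) * (g i - g (i - 1))) + (\<Sum>i=1..Suc n. g i - g (i - 1))"
    by (simp add: sum.distrib[symmetric] algebra_simps)
  also have "\<dots> = (\<Sum>i=1..n. (int n - int i + 1) * (g i - g (i - 1))) + (g (Suc n) - g 0)"
    unfolding sum_diff_telescope by simp
  finally show ?case using Suc by (simp add: algebra_simps)
qed simp

text \<open>The weight (n - i + 1) (n - j + 1) (n - k + 1) counts the (a, b, c) \<in> [1, n]^3 above
  (i, j, k), and C is the corner sum of Xi_inv C.\<close>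
lemma sum_weighted_Xi_inv:
  fixes C :: hypermatrix
  assumes faces: "\<And>i j. i \<le> n \<Longrightarrow> j \<le> n \<Longrightarrow> C i j 0 = 0 \<and> C i 0 j = 0 \<and> C 0 i j = 0"
  shows "(\<Sum>i=1..n. \<Sum>j=1..n. \<Sum>k=1..n.
            (int n - int i + 1) * (int n - int j + 1) * (int n - int k + 1) * Xi_inv C i j k)
       = (\<Sum>i=1..n. \<Sum>j=1..n. \<Sum>k=1..n. C i j k)"
proof -
  define W where "W i = int n - int i + 1" for i
  define F where "F i j k = C i j k - C (i - 1) j k" for i j k
  define G where "G i j k = F i j k - F i (j - 1) k" for i j k
  have k_sum: "(\<Sum>k=1..n. W k * Xi_inv C i j k) = (\<Sum>k=1..n. G i j k)" if "i \<le> n" "j \<le> n" for i j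
  proof -
    have "Xi_inv C i j k = G i j k - G i j (k - 1)" for k
      unfolding Xi_inv_def G_def F_def by simp
    moreover have "G i j 0 = 0" using faces that unfolding G_def F_def by simp
    ultimately show ?thesis
      unfolding W_def using sum_weighted_diff[of n "G i j"] by simp
  qed
  have j_sum: "(\<Sum>j=1..n. W j * G i j k) = (\<Sum>j=1..n. F i j k)" if "i \<le> n" "k \<le> n" for i k
    using faces that sum_weighted_diff[of n "\<lambda>j. F i j k"] unfolding W_def G_def F_def by simp
  have i_sum: "(\<Sum>i=1..n. W i * F i j k) = (\<Sum>i=1..n. C i j k)" if "j \<le> n" "k \<le> n" for j k
    using faces that sum_weighted_diff[of n "\<lambda>i. C i j k"] unfolding W_def F_def by simp
  have swap: "(\<Sum>j\<in>A. a j * (\<Sum>k\<in>B. b j k)) = (\<Sum>k\<in>B. \<Sum>j\<in>A. a j * b j k)"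
    for A B :: "nat set" and a :: "nat \<Rightarrow> int" and b
    by (simp add: sum_distrib_left) (rule sum.swap)
  have "(\<Sum>i=1..n. \<Sum>j=1..n. \<Sum>k=1..n. W i * W j * W k * Xi_inv C i j k)
      = (\<Sum>i=1..n. W i * (\<Sum>j=1..n. W j * (\<Sum>k=1..n. W k * Xi_inv C i j k)))"
    by (simp add: sum_distrib_left mult.assoc)
  also have "\<dots> = (\<Sum>i=1..n. W i * (\<Sum>j=1..n. W j * (\<Sum>k=1..n. G i j k)))"
    using k_sum by simp
  also have "\<dots> = (\<Sum>i=1..n. W i * (\<Sum>k=1..n. \<Sum>j=1..n. W j * G i j k))"
    by (simp only: swap)
  also have "\<dots> = (\<Sum>i=1..n. W i * (\<Sum>k=1..n. \<Sum>j=1..n. F i j k))"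
    using j_sum by simp
  also have "\<dots> = (\<Sum>k=1..n. \<Sum>j=1..n. \<Sum>i=1..n. W i * F i j k)"
    by (simp only: swap)
  also have "\<dots> = (\<Sum>k=1..n. \<Sum>j=1..n. \<Sum>i=1..n. C i j k)"
    using i_sum by simp
  also have "\<dots> = (\<Sum>k=1..n. \<Sum>i=1..n. \<Sum>j=1..n. C i j k)"
    by (intro sum.cong refl sum.swap)
  also have "\<dots> = (\<Sum>i=1..n. \<Sum>k=1..n. \<Sum>j=1..n. C i j k)"
    by (rule sum.swap)
  also have "\<dots> = (\<Sum>i=1..n. \<Sum>j=1..n. \<Sum>k=1..n. C i j k)"
    by (intro sum.cong refl sum.swap)
  finally show ?thesis unfolding W_def .
qed

lemma entry_sum_eq_interior:
  assumes "C \<in> CSH n"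
  shows "entry_sum n C = (\<Sum>i=1..n. \<Sum>j=1..n. \<Sum>k=1..n. C i j k)"
proof -
  have atMost: "{..n} = insert 0 {1..n}" by auto
  show ?thesis
    unfolding entry_sum_nested atMost using CSH_faces[OF assms] by (simp add: atMost)
qed

lemma sum_Xi_inv_line:
  assumes "C \<in> CSH n" "i \<in> {1..n}" "j \<in> {1..n}"
  shows "(\<Sum>k=1..n. Xi_inv C i j k) = 1"
proof -
  define G where "G k = C i j k - C (i - 1) j k - C i (j - 1) k + C (i - 1) (j - 1) k" for k
  have "(\<Sum>k=1..n. Xi_inv C i j k) = (\<Sum>k=1..n. G k - G (k - 1))"
    unfolding Xi_inv_def G_def by (simp add: algebra_simps)
  also have "\<dots> = G n - G 0" by (rule sum_diff_telescope)
  also have "\<dots> = 1"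
    using CSH_faces[OF assms(1)] assms(2,3) unfolding G_def
    by (simp add: of_nat_diff algebra_simps le_diff_conv)
  finally show ?thesis .
qed

lemma weighted_L_val_sum:
  assumes C: "C \<in> CSH n"
  shows "(\<Sum>i=1..n. \<Sum>j=1..n. (int n - int i + 1) * (int n - int j + 1) * (int n - L_val n C i j + 1))
       = entry_sum n C"
proof -
  have L: "int n - L_val n C i j + 1 = (\<Sum>k=1..n. (int n - int k + 1) * Xi_inv C i j k)"
    if "i \<in> {1..n}" "j \<in> {1..n}" for i j
  proof -
    have "(\<Sum>k=1..n. (int n - int k + 1) * Xi_inv C i j k)
        = (int n + 1) * (\<Sum>k=1..n. Xi_inv C i j k) - L_val n C i j"
      unfolding L_val_def sum_distrib_left sum_subtractf[symmetric]
      by (rule sum.cong) (simp_all add: algebra_simps)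
    then show ?thesis using sum_Xi_inv_line[OF C that] by simp
  qed
  have "(\<Sum>i=1..n. \<Sum>j=1..n. (int n - int i + 1) * (int n - int j + 1) * (int n - L_val n C i j + 1))
      = (\<Sum>i=1..n. \<Sum>j=1..n. \<Sum>k=1..n.
           (int n - int i + 1) * (int n - int j + 1) * (int n - int k + 1) * Xi_inv C i j k)"
    using L by (simp add: sum_distrib_left mult.assoc)
  also have "\<dots> = entry_sum n C"
    using sum_weighted_Xi_inv CSH_faces[OF C] entry_sum_eq_interior[OF C] by simp
  finally show ?thesis .
qed

section \<open>The entry sum of the minimum\<close>

definition Mmin_line_sum :: "nat \<Rightarrow> nat \<Rightarrow> nat \<Rightarrow> int" where
  "Mmin_line_sum n i j = (\<Sum>k\<le>n. Mmin n i j k)"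

lemma Mmin_line_sum_commute: "Mmin_line_sum n i j = Mmin_line_sum n j i"
  unfolding Mmin_line_sum_def by (simp add: Mmin_commute12)

lemma sum_min_split:
  fixes f g :: "nat \<Rightarrow> int"
  assumes "t \<le> n" "\<And>k. k \<le> t \<Longrightarrow> f k \<le> g k" "\<And>k. t \<le> k \<Longrightarrow> k \<le> n \<Longrightarrow> g k \<le> f k"
  shows "(\<Sum>k\<le>n. min (f k) (g k)) = (\<Sum>k\<le>t. f k) + (\<Sum>k\<in>{t<..n}. g k)"
proof -
  have split: "{..n} = {..t} \<union> {t<..n}" using assms(1) by auto
  have "(\<Sum>k\<le>n. min (f k) (g k)) = (\<Sum>k\<le>t. min (f k) (g k)) + (\<Sum>k\<in>{t<..n}. min (f k) (g k))"
    unfolding split by (rule sum.union_disjoint) auto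
  also have "\<dots> = (\<Sum>k\<le>t. f k) + (\<Sum>k\<in>{t<..n}. g k)"
    using assms(2,3) by (simp add: min_absorb1 min_absorb2)
  finally show ?thesis .
qed

lemma double_sum_atMost_linear: "2 * (\<Sum>k\<le>t. int k * m) = m * int t * (int t + 1)"
  by (induction t) (simp_all add: algebra_simps)

lemma double_sum_greaterThanAtMost_affine:
  "t \<le> u \<Longrightarrow> 2 * (\<Sum>k\<in>{t<..u}. p - (c - int k) * l)
     = 2 * (int u - int t) * p
       - l * (2 * (int u - int t) * c - int u * (int u + 1) + int t * (int t + 1))"
proof (induction u rule: dec_induct)
  case (step u)
  have "{t<..Suc u} = insert (Suc u) {t<..u}" using step by auto
  then show ?case using step by (simp add: algebra_simps)
qed simp

lemma Mmin_line_sum_below_antidiagonal: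
  assumes "i \<le> j" "i + j \<le> n"
  shows "2 * Mmin_line_sum n i j = int i * int j * (2 * int n - int j + 1)"
proof -
  have "Mmin_line_sum n i j = (\<Sum>k\<le>n. min (int k * int i) (int i * int j - (int n - int k) * 0))"
    unfolding Mmin_line_sum_def using assms by (intro sum.cong) (auto simp: Mmin_eq min_absorb1)
  also have "\<dots> = (\<Sum>k\<le>j. int k * int i) + (\<Sum>k\<in>{j<..n}. int i * int j - (int n - int k) * 0)"
  proof (intro sum_min_split)
    fix k assume "k \<le> j"
    then show "int k * int i \<le> int i * int j - (int n - int k) * 0"
      using mult_right_mono[of "int k" "int j" "int i"] by (simp add: mult.commute)
  next
    fix k assume "j \<le> k"
    then show "int i * int j - (int n - int k) * 0 \<le> int k * int i"
      using mult_right_mono[of "int j" "int k" "int i"] by (simp add: mult.commute)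
  qed (use assms in simp)
  finally show ?thesis
    using assms
    by (simp only: distrib_left double_sum_atMost_linear double_sum_greaterThanAtMost_affine)
      (simp add: algebra_simps)
qed

lemma Mmin_line_sum_above_antidiagonal:
  assumes "i \<le> j" "n < i + j" "j \<le> n"
  shows "2 * Mmin_line_sum n i j = int i * (int n - int i) * (int n - int i + 1)
     + 2 * int i * int i * int j - (int i + int j - int n) * int i * (int i - 1)"
proof -
  let ?l = "int i + int j - int n"
  have tradeoff: "int i * int j - (int n - int k) * ?l - int k * int i
      = (int n - int i - int k) * (int n - int j)" for k
    by (simp add: algebra_simps)
  have "Mmin_line_sum n i j = (\<Sum>k\<le>n. min (int k * int i) (int i * int j - (int n - int k) * ?l))"
    unfolding Mmin_line_sum_def using assms by (intro sum.cong) (auto simp: Mmin_eq min_absorb1)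
  also have "\<dots> = (\<Sum>k\<le>n - i. int k * int i) + (\<Sum>k\<in>{n - i<..n}. int i * int j - (int n - int k) * ?l)"
  proof (intro sum_min_split)
    fix k assume "k \<le> n - i"
    then have "0 \<le> (int n - int i - int k) * (int n - int j)" using assms by simp
    then show "int k * int i \<le> int i * int j - (int n - int k) * ?l"
      using tradeoff[of k] by linarith
  next
    fix k assume "n - i \<le> k" "k \<le> n"
    then have "(int n - int i - int k) * (int n - int j) \<le> 0"
      using assms by (intro mult_nonpos_nonneg) auto
    then show "int i * int j - (int n - int k) * ?l \<le> int k * int i"
      using tradeoff[of k] by linarith
  qed simp
  finally show ?thesis
    using assms
    by (simp only: distrib_left double_sum_atMost_linear double_sum_greaterThanAtMost_affine
        of_nat_diff)
      (simp add: algebra_simps)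
qed

lemma sum_telescope_int:
  fixes f :: "nat \<Rightarrow> int" and Q :: "int \<Rightarrow> int"
  assumes "a \<le> b" "\<And>j. a \<le> j \<Longrightarrow> j < b \<Longrightarrow> f j = Q (int j + 1) - Q (int j)"
  shows "(\<Sum>j\<in>{a..<b}. f j) = Q (int b) - Q (int a)"
proof -
  have "(\<Sum>j\<in>{a..<b}. f j) = (\<Sum>j\<in>{a..<b}. (Q \<circ> int) (Suc j) - (Q \<circ> int) j)"
    using assms(2) by (intro sum.cong) (auto simp: add.commute)
  also have "\<dots> = Q (int b) - Q (int a)"
    using sum_Suc_diff'[OF assms(1), of "Q \<circ> int"] by simp
  finally show ?thesis .
qed

text \<open>South, west, north and east name the four triangles cut out of the square of pairs (i, j)
  by its diagonal and antidiagonal, with i horizontal and j vertical.\<close>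
lemma Mmin_line_sums_south:
  assumes "a \<le> b" "b \<le> i + 1" "i + b \<le> n + 1"
  shows "24 * (\<Sum>j\<in>{a..<b}. Mmin_line_sum n i j)
    = 6 * int i * (2 * int n - int i + 1) * (int b * (int b - 1) - int a * (int a - 1))"
proof -
  define Q where "Q J = 6 * int i * (2 * int n - int i + 1) * J * (J - 1)" for J
  have "(\<Sum>j\<in>{a..<b}. 24 * Mmin_line_sum n i j) = Q (int b) - Q (int a)"
  proof (rule sum_telescope_int[OF assms(1)])
    fix j assume "a \<le> j" "j < b"
    then have "2 * Mmin_line_sum n i j = int i * int j * (2 * int n - int i + 1)"
      using Mmin_line_sum_below_antidiagonal[of j i n] assms
      by (simp add: Mmin_line_sum_commute ac_simps)
    then show "24 * Mmin_line_sum n i j = Q (int j + 1) - Q (int j)"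
      unfolding Q_def by (simp add: algebra_simps)
  qed
  then show ?thesis unfolding Q_def by (simp add: sum_distrib_left algebra_simps)
qed

lemma Mmin_line_sums_west:
  assumes "a \<le> b" "i \<le> a" "i + b \<le> n + 1"
  shows "24 * (\<Sum>j\<in>{a..<b}. Mmin_line_sum n i j) = 4 * int i
    * (int b * (int b - 1) * (3 * int n - int b + 2)
       - int a * (int a - 1) * (3 * int n - int a + 2))"
proof -
  define Q where "Q J = 4 * int i * J * (J - 1) * (3 * int n - J + 2)" for J
  have "(\<Sum>j\<in>{a..<b}. 24 * Mmin_line_sum n i j) = Q (int b) - Q (int a)"
  proof (rule sum_telescope_int[OF assms(1)])
    fix j assume "a \<le> j" "j < b"
    then have "2 * Mmin_line_sum n i j = int i * int j * (2 * int n - int j + 1)"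
      using Mmin_line_sum_below_antidiagonal[of i j n] assms by simp
    then show "24 * Mmin_line_sum n i j = Q (int j + 1) - Q (int j)"
      unfolding Q_def by (simp add: algebra_simps)
  qed
  then show ?thesis unfolding Q_def by (simp add: sum_distrib_left algebra_simps)
qed

lemma Mmin_line_sums_north:
  assumes "a \<le> b" "i \<le> a" "n < i + a" "b \<le> n + 1"
  shows "24 * (\<Sum>j\<in>{a..<b}. Mmin_line_sum n i j) = 6 * int i
    * (int b * ((int i + 1) * (int b - 1) + 2 * int n * (int n - int i))
       - int a * ((int i + 1) * (int a - 1) + 2 * int n * (int n - int i)))"
proof -
  define Q where "Q J = 6 * int i * J * ((int i + 1) * (J - 1) + 2 * int n * (int n - int i))" for J
  have "(\<Sum>j\<in>{a..<b}. 24 * Mmin_line_sum n i j) = Q (int b) - Q (int a)"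
  proof (rule sum_telescope_int[OF assms(1)])
    fix j assume "a \<le> j" "j < b"
    then have "2 * Mmin_line_sum n i j = int i * (int n - int i) * (int n - int i + 1)
        + 2 * int i * int i * int j - (int i + int j - int n) * int i * (int i - 1)"
      using Mmin_line_sum_above_antidiagonal[of i j n] assms by simp
    then show "24 * Mmin_line_sum n i j = Q (int j + 1) - Q (int j)"
      unfolding Q_def by (simp add: algebra_simps)
  qed
  then show ?thesis unfolding Q_def by (simp add: sum_distrib_left algebra_simps)
qed

lemma Mmin_line_sums_east:
  assumes "a \<le> b" "n < i + a" "b \<le> i + 1" "i \<le> n"
  shows "24 * (\<Sum>j\<in>{a..<b}. Mmin_line_sum n i j)
    = 2 * (int b * (int b - 1) * (2 * int i * (int b + 1) - int n * (2 * int b - 1) + 3 * int n ^ 2)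
       - int a * (int a - 1) * (2 * int i * (int a + 1) - int n * (2 * int a - 1) + 3 * int n ^ 2))"
proof -
  define Q
    where "Q J = 2 * J * (J - 1) * (2 * int i * (J + 1) - int n * (2 * J - 1) + 3 * int n ^ 2)" for J
  have "(\<Sum>j\<in>{a..<b}. 24 * Mmin_line_sum n i j) = Q (int b) - Q (int a)"
  proof (rule sum_telescope_int[OF assms(1)])
    fix j assume "a \<le> j" "j < b"
    then have "2 * Mmin_line_sum n i j = int j * (int n - int j) * (int n - int j + 1)
        + 2 * int j * int j * int i - (int i + int j - int n) * int j * (int j - 1)"
      using Mmin_line_sum_above_antidiagonal[of j i n] assms
      by (simp add: Mmin_line_sum_commute ac_simps)
    then show "24 * Mmin_line_sum n i j = Q (int j + 1) - Q (int j)"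
      unfolding Q_def by (simp add: algebra_simps power2_eq_square)
  qed
  then show ?thesis unfolding Q_def by (simp add: sum_distrib_left algebra_simps)
qed

lemma sum_atMost_split3:
  fixes f :: "nat \<Rightarrow> int"
  assumes "a \<le> b" "b \<le> n + 1"
  shows "(\<Sum>j\<le>n. f j) = sum f {0..<a} + sum f {a..<b} + sum f {b..<n + 1}"
proof -
  have "{..n} = {0..<n + 1}" by auto
  then show ?thesis
    using sum.atLeastLessThan_concat[of 0 a b f] sum.atLeastLessThan_concat[of 0 b "n + 1" f] assms
    by simp
qed

lemma Mmin_row_sum_low:
  assumes "2 * i \<le> n"
  shows "24 * (\<Sum>j\<le>n. Mmin_line_sum n i j) = 4 * int i ^ 2 - 4 * int i ^ 4 + 4 * int n * int i
    + 12 * int n ^ 2 * int i + 8 * int n ^ 3 * int i"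
proof -
  define S where "S a b = 24 * (\<Sum>j\<in>{a..<b}. Mmin_line_sum n i j)" for a b
  have "24 * (\<Sum>j\<le>n. Mmin_line_sum n i j)
      = S 0 (i + 1) + S (i + 1) (n - i + 1) + S (n - i + 1) (n + 1)"
    using sum_atMost_split3[of "i + 1" "n - i + 1" n] assms unfolding S_def by (simp add: algebra_simps)
  also have "\<dots> = 4 * int i ^ 2 - 4 * int i ^ 4 + 4 * int n * int i
    + 12 * int n ^ 2 * int i + 8 * int n ^ 3 * int i"
    using Mmin_line_sums_south[of 0 "i + 1" i n, folded S_def]
      Mmin_line_sums_west[of "i + 1" "n - i + 1" i n, folded S_def]
      Mmin_line_sums_north[of "n - i + 1" "n + 1" i n, folded S_def] assms
    by simp (simp add: of_nat_diff algebra_simps eval_nat_numeral)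
  finally show ?thesis .
qed

lemma Mmin_row_sum_high:
  assumes "n < 2 * i" "i \<le> n"
  shows "24 * (\<Sum>j\<le>n. Mmin_line_sum n i j) = 4 * int i ^ 2 - 4 * int i ^ 4 + 16 * int n * int i ^ 3
    + 2 * int n ^ 2 + 12 * int n ^ 2 * int i - 24 * int n ^ 2 * int i ^ 2 + 20 * int n ^ 3 * int i
    - 2 * int n ^ 4"
proof -
  define S where "S a b = 24 * (\<Sum>j\<in>{a..<b}. Mmin_line_sum n i j)" for a b
  have "24 * (\<Sum>j\<le>n. Mmin_line_sum n i j)
      = S 0 (n - i + 1) + S (n - i + 1) (i + 1) + S (i + 1) (n + 1)"
    using sum_atMost_split3[of "n - i + 1" "i + 1" n] assms unfolding S_def by (simp add: algebra_simps)
  also have "\<dots> = 4 * int i ^ 2 - 4 * int i ^ 4 + 16 * int n * int i ^ 3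
    + 2 * int n ^ 2 + 12 * int n ^ 2 * int i - 24 * int n ^ 2 * int i ^ 2 + 20 * int n ^ 3 * int i
    - 2 * int n ^ 4"
    using Mmin_line_sums_south[of 0 "n - i + 1" i n, folded S_def]
      Mmin_line_sums_east[of "n - i + 1" "i + 1" n i, folded S_def]
      Mmin_line_sums_north[of "i + 1" "n + 1" i n, folded S_def] assms
    by simp (simp add: of_nat_diff algebra_simps eval_nat_numeral)
  finally show ?thesis .
qed

text \<open>T1 and T2 are discrete antiderivatives of 60 times the row sums for 2 i \<le> n and
  for n < 2 i respectively.\<close>
lemma entry_sum_Mmin:
  "480 * entry_sum n (Mmin n) = 69 * int n ^ 5 + 180 * int n ^ 4 + 170 * int n ^ 3 + 60 * int n ^ 2
     + (if even n then 16 else 1) * int n"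
proof -
  define N m where "N = int n" and "m = n div 2"
  define T1 where "T1 X = 24 * X * (X - 1)
    * (10 * N ^ 3 + 15 * N ^ 2 + 5 * N - (X + 1) * (2 * X - 1) * (X - 2))" for X
  define T2 where "T2 X = 48 * X - 120 * X ^ 2 + 120 * X ^ 4 - 48 * X ^ 5
    + 240 * N * X ^ 2 - 480 * N * X ^ 3 + 240 * N * X ^ 4
    - 480 * N ^ 2 * X + 1080 * N ^ 2 * X ^ 2 - 480 * N ^ 2 * X ^ 3
    - 600 * N ^ 3 * X + 600 * N ^ 3 * X ^ 2 - 120 * N ^ 4 * X" for X
  let ?R = "\<lambda>i. 60 * (24 * (\<Sum>j\<le>n. Mmin_line_sum n i j))"
  have "1440 * entry_sum n (Mmin n) = (\<Sum>i\<in>{0..<m + 1}. ?R i) + (\<Sum>i\<in>{m + 1..<n + 1}. ?R i)"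
    using sum.atLeastLessThan_concat[of 0 "m + 1" "n + 1" ?R]
    by (simp add: m_def entry_sum_nested Mmin_line_sum_def sum_distrib_left atLeast0LessThan
        lessThan_Suc_atMost)
  also have "(\<Sum>i\<in>{0..<m + 1}. ?R i) = T1 (int (m + 1)) - T1 (int 0)"
  proof (rule sum_telescope_int)
    fix i assume "i < m + 1"
    then have "2 * i \<le> n" unfolding m_def by simp
    then have "?R i = 60 * (4 * int i ^ 2 - 4 * int i ^ 4 + 4 * N * int i + 12 * N ^ 2 * int i
        + 8 * N ^ 3 * int i)"
      unfolding N_def by (simp only: Mmin_row_sum_low)
    then show "?R i = T1 (int i + 1) - T1 (int i)"
      unfolding T1_def by (simp add: algebra_simps eval_nat_numeral)
  qed simp
  also have "(\<Sum>i\<in>{m + 1..<n + 1}. ?R i) = T2 (int (n + 1)) - T2 (int (m + 1))"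
  proof (rule sum_telescope_int)
    fix i assume "m + 1 \<le> i" "i < n + 1"
    then have "n < 2 * i" "i \<le> n" unfolding m_def by simp_all
    then have "?R i = 60 * (4 * int i ^ 2 - 4 * int i ^ 4 + 16 * N * int i ^ 3 + 2 * N ^ 2
        + 12 * N ^ 2 * int i - 24 * N ^ 2 * int i ^ 2 + 20 * N ^ 3 * int i - 2 * N ^ 4)"
      unfolding N_def by (simp only: Mmin_row_sum_high)
    then show "?R i = T2 (int i + 1) - T2 (int i)"
      unfolding T2_def by (simp add: algebra_simps eval_nat_numeral)
  qed (simp add: m_def)
  also have "T1 (int (m + 1)) - T1 (int 0) + (T2 (int (n + 1)) - T2 (int (m + 1)))
      = 3 * (69 * N ^ 5 + 180 * N ^ 4 + 170 * N ^ 3 + 60 * N ^ 2 + (if even n then 16 else 1) * N)"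
  proof (cases "even n")
    case True
    then have "n = 2 * m" unfolding m_def by simp
    then show ?thesis
      using True unfolding T1_def T2_def N_def by (simp add: algebra_simps eval_nat_numeral)
  next
    case False
    then have "n = 2 * m + 1" unfolding m_def by simp
    then show ?thesis
      using False unfolding T1_def T2_def N_def by (simp add: algebra_simps eval_nat_numeral)
  qed
  finally show ?thesis unfolding N_def by simp
qed

theorem mainTheorem11:
  fixes n :: nat and C :: hypermatrix
  assumes "C \<in> CSH n"
  shows "(\<exists>S. maximal_chain n (Mmin n) C S) \<and>
         (\<forall>S. maximal_chain n (Mmin n) C S \<longrightarrow>
            finite S \<and>
            real (card S) - 1 =
              (69 * real n ^ 5 + 180 * real n ^ 4 + 170 * real n ^ 3 + 60 * real n ^ 2
                 + (4::real) powi (1 + (-1::int) ^ n) * real n) / 480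
              - (\<Sum>i=1..n. \<Sum>j=1..n. real (n - i + 1) * real (n - j + 1)
                    * real_of_int (int n - L_val n C i j + 1)))"
proof (intro conjI allI impI)
  show "\<exists>S. maximal_chain n (Mmin n) C S"
    using graded_order.maximal_chain_exists[OF graded_order_CSH Mmin_in_CSH,
        OF assms Mmin_least[OF assms]]
    unfolding maximal_chain_CSH .
next
  fix S assume "maximal_chain n (Mmin n) C S"
  then have S: "graded_order.maximal_chain (CSH n) (cs_le n) (Mmin n) C S"
    unfolding maximal_chain_CSH .
  show "finite S" using graded_order.maximal_chain_card(1)[OF graded_order_CSH S] .
  have "real (card S) - 1 = real_of_int (entry_sum n (Mmin n)) - real_of_int (entry_sum n C)"
    using graded_order.maximal_chain_card(2)[OF graded_order_CSH S] by simp
  also have "real_of_int (entry_sum n (Mmin n)) = (69 * real n ^ 5 + 180 * real n ^ 4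
      + 170 * real n ^ 3 + 60 * real n ^ 2 + (4::real) powi (1 + (-1::int) ^ n) * real n) / 480"
    using arg_cong[OF entry_sum_Mmin[of n], of real_of_int]
    by (cases "even n") (simp_all add: field_simps)
  also have "real_of_int (entry_sum n C) = (\<Sum>i=1..n. \<Sum>j=1..n. real (n - i + 1) * real (n - j + 1)
      * real_of_int (int n - L_val n C i j + 1))"
    unfolding weighted_L_val_sum[OF assms, symmetric] of_int_sum
    by (intro sum.cong refl) (simp add: of_nat_diff algebra_simps)
  finally show "real (card S) - 1 = (69 * real n ^ 5 + 180 * real n ^ 4 + 170 * real n ^ 3
      + 60 * real n ^ 2 + (4::real) powi (1 + (-1::int) ^ n) * real n) / 480
      - (\<Sum>i=1..n. \<Sum>j=1..n. real (n - i + 1) * real (n - j + 1)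
          * real_of_int (int n - L_val n C i j + 1))" .
qed

end
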